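(* Let $s > \frac12$, $T>0$, and let $v \in C([0,T];H^s(\mathbb T))$ be a solution of \[\partial_t \hat{v}(n) - ip(n) \hat{v}(n) = -\frac{\mu i}{(2\pi)^2} n\big(|\hat{v}(n)|^2 - |\hat{v}_0(n)|^2\big) \hat{v}(n) + \frac{\mu i}{3(2\pi)^2}n \sum_{\mathcal N_n} \hat{v}(n_1)\hat{v}(n_2)\hat{v}(n_3),\qquad n\in\mathbb Z,\] with $v(0)=v_0$. Then \[\Big\|\mathcal F_x^{-1}\big(n(|\hat{v}(n)|^2 - |\hat{v}_0(n)|^2) \hat{v}(n)\big)\Big\|_{L_T^{\infty}H^{-s}} \lesssim \|v\|_{L_T^{\infty}H^s}^3\] and \[\Big\|\mathcal F_x^{-1}\Big(n \sum_{\mathcal N_n} \hat{v}(n_1)\hat{v}(n_2)\hat{v}(n_3)\Big)\Big\|_{L_T^{\infty}H^{-s}} \lesssim \|v\|_{L_T^{\infty}H^s}^3.\]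
   Context: $\mathbb T=\mathbb R/2\pi\mathbb Z$; $\beta\ge0$, $\gamma\in\mathbb R$, $\mu=\pm1$; $v$ is real-valued and $\hat v(n)$ denotes its spatial Fourier coefficient at $n\in\mathbb Z$. $p(n)=n^5+\beta n^3-(\gamma+\frac{\mu}{2\pi}\|v_0\|_{L^2}^2)n-\frac{\mu n}{(2\pi)^2}|\hat v_0(n)|^2$, and $\mathcal N_n=\{(n_1,n_2,n_3)\in\mathbb Z^3: n_1+n_2+n_3=n,\ (n_1+n_2)(n_2+n_3)(n_3+n_1)\ne0\}$. $L^\infty_TH^{\sigma}$ denotes $L^\infty([0,T];H^\sigma(\mathbb T))$. $A\lesssim B$ means $A\le CB$ for a constant $C>0$. *)

theory Defs
  imports "HOL-Analysis.Analysis"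
begin

text \<open>Functions on the torus are represented by their Fourier coefficients
  \<open>f :: int \<Rightarrow> complex\<close>, with the convention
  \<open>f(n) = \<integral>_T v(x) e^{-inx} dx\<close>.\<close>

definition hs_weight :: "real \<Rightarrow> int \<Rightarrow> real" where
  "hs_weight s n = (1 + (real_of_int n)\<^sup>2) powr s"

definition in_Hs :: "real \<Rightarrow> (int \<Rightarrow> complex) \<Rightarrow> bool" where
  "in_Hs s f \<longleftrightarrow> (\<lambda>n. hs_weight s n * (cmod (f n))\<^sup>2) summable_on UNIV"

definition hs_norm :: "real \<Rightarrow> (int \<Rightarrow> complex) \<Rightarrow> real" where
  "hs_norm s f = sqrt (\<Sum>\<^sub>\<infinity>n\<in>UNIV. hs_weight s n * (cmod (f n))\<^sup>2)"

text \<open>Squared \<open>L^2\<close> norm via Parseval: \<open>\<parallel>v\<parallel>^2 = (2\<pi>)^{-1} \<Sum> |f(n)|^2\<close>.\<close>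
definition l2_norm_sq :: "(int \<Rightarrow> complex) \<Rightarrow> real" where
  "l2_norm_sq f = (\<Sum>\<^sub>\<infinity>n\<in>UNIV. (cmod (f n))\<^sup>2) / (2 * pi)"

definition real_valued_coeffs :: "(int \<Rightarrow> complex) \<Rightarrow> bool" where
  "real_valued_coeffs f \<longleftrightarrow> (\<forall>n. f (-n) = cnj (f n))"

definition resonant_set :: "int \<Rightarrow> (int \<times> int \<times> int) set" where
  "resonant_set n = {(n1, n2, n3). n1 + n2 + n3 = n \<and> (n1 + n2) * (n2 + n3) * (n3 + n1) \<noteq> 0}"

definition trilin :: "(int \<Rightarrow> complex) \<Rightarrow> int \<Rightarrow> complex" where
  "trilin f n = (\<Sum>\<^sub>\<infinity>(n1, n2, n3)\<in>resonant_set n. f n1 * f n2 * f n3)"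

definition pfun :: "real \<Rightarrow> real \<Rightarrow> real \<Rightarrow> (int \<Rightarrow> complex) \<Rightarrow> int \<Rightarrow> real" where
  "pfun \<beta> \<gamma> \<mu> f0 n =
     (real_of_int n)^5 + \<beta> * (real_of_int n)^3
     - (\<gamma> + \<mu> / (2 * pi) * l2_norm_sq f0) * real_of_int n
     - \<mu> * real_of_int n / (2 * pi)\<^sup>2 * (cmod (f0 n))\<^sup>2"

definition cont_Hs :: "real \<Rightarrow> real \<Rightarrow> (real \<Rightarrow> int \<Rightarrow> complex) \<Rightarrow> bool" where
  "cont_Hs s T v \<longleftrightarrow> (\<forall>t\<in>{0..T}. in_Hs s (v t)) \<and>
     (\<forall>t0\<in>{0..T}. ((\<lambda>t. hs_norm s (\<lambda>n. v t n - v t0 n)) \<longlongrightarrow> 0) (at t0 within {0..T}))"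

definition solves_eq :: "real \<Rightarrow> real \<Rightarrow> real \<Rightarrow> real \<Rightarrow> (real \<Rightarrow> int \<Rightarrow> complex) \<Rightarrow> bool" where
  "solves_eq \<beta> \<gamma> \<mu> T v \<longleftrightarrow>
     (\<forall>n. \<forall>t\<in>{0..T}.
        ((\<lambda>\<tau>. v \<tau> n) has_vector_derivative
          (\<i> * complex_of_real (pfun \<beta> \<gamma> \<mu> (v 0) n) * v t n
           - complex_of_real \<mu> * \<i> / (2 * pi)\<^sup>2 * of_int n
               * complex_of_real ((cmod (v t n))\<^sup>2 - (cmod (v 0 n))\<^sup>2) * v t n
           + complex_of_real \<mu> * \<i> / (3 * (2 * pi)\<^sup>2) * of_int n * trilin (v t) n))
        (at t within {0..T}))"

end

theory Submission
  imports Defs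
begin

text \<open>
  Write \<open><n> = (1 + n^2)^(1/2)\<close>, so that \<open>hs_weight s n = <n>^(2s)\<close>. For the resonant term,
  the pointwise bound \<open>|u(n)|^2 \<le> <n>^(-2s) |u|^2_{H^s}\<close> lets the factor
  \<open>|v(n)|^2 - |v_0(n)|^2\<close> absorb the derivative \<open>n\<close> as soon as \<open>s \<ge> 1/4\<close>.

  For the trilinear term, \<open>|n| <n>^(-s) \<le> 3^s (<n_1>^s + <n_2>^s + <n_3>^s)\<close> on
  \<open>n = n_1 + n_2 + n_3\<close> moves the weight onto a single factor. The result is a convolution of
  two \<open>l^1\<close> sequences with an \<open>l^2\<close> sequence, which lies in \<open>l^2\<close> by Young's inequality, and
  \<open>H^s\<close> embeds into \<open>l^1\<close> for \<open>s > 1/2\<close> by Cauchy-Schwarz. Dropping the non-resonance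
  condition from the sum only enlarges the sum of absolute values.
\<close>

section \<open>Real infinite sums\<close>

lemma infsum_ge_element:
  fixes f :: "'a \<Rightarrow> real"
  assumes "f summable_on A" "x \<in> A" "\<And>y. y \<in> A \<Longrightarrow> f y \<ge> 0"
  shows "f x \<le> infsum f A"
  using finite_sum_le_infsum[OF assms(1), of "{x}"] assms(2,3) by simp

lemma has_sum_sum:
  fixes f :: "'i \<Rightarrow> 'a \<Rightarrow> 'b::topological_comm_monoid_add"
  assumes "finite I" "\<And>i. i \<in> I \<Longrightarrow> (f i has_sum S i) A"
  shows "((\<lambda>x. \<Sum>i\<in>I. f i x) has_sum (\<Sum>i\<in>I. S i)) A"
  using assms by (induction I rule: finite_induct) (auto intro: has_sum_add)

lemma sum_mult_le_sqrt_sum_squares: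
  fixes a b :: "'a \<Rightarrow> real"
  shows "(\<Sum>i\<in>I. a i * b i) \<le> sqrt (\<Sum>i\<in>I. (a i)\<^sup>2) * sqrt (\<Sum>i\<in>I. (b i)\<^sup>2)"
proof -
  have "(\<Sum>i\<in>I. a i * b i) \<le> sqrt ((\<Sum>i\<in>I. a i * b i)\<^sup>2)" by simp
  also have "\<dots> \<le> sqrt ((\<Sum>i\<in>I. (a i)\<^sup>2) * (\<Sum>i\<in>I. (b i)\<^sup>2))"
    by (rule real_sqrt_le_mono) (rule Cauchy_Schwarz_ineq_sum)
  finally show ?thesis by (simp add: real_sqrt_mult)
qed

lemma
  fixes x y :: "'a \<Rightarrow> real"
  assumes x: "(\<lambda>i. (x i)\<^sup>2) summable_on A" and y: "(\<lambda>i. (y i)\<^sup>2) summable_on A"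
  shows summable_on_mult_of_squares: "(\<lambda>i. x i * y i) summable_on A"
    and Cauchy_Schwarz_infsum:
      "infsum (\<lambda>i. x i * y i) A \<le> sqrt (infsum (\<lambda>i. (x i)\<^sup>2) A) * sqrt (infsum (\<lambda>i. (y i)\<^sup>2) A)"
proof -
  have "norm (x i * y i) \<le> (x i)\<^sup>2 + (y i)\<^sup>2" for i
  proof -
    have "2 * \<bar>x i\<bar> * \<bar>y i\<bar> \<le> (x i)\<^sup>2 + (y i)\<^sup>2"
      using sum_squares_bound[of "\<bar>x i\<bar>" "\<bar>y i\<bar>"] by simp
    moreover have "0 \<le> \<bar>x i\<bar> * \<bar>y i\<bar>" by simp
    ultimately show ?thesis unfolding real_norm_def abs_mult by linarith
  qed
  then have "(\<lambda>i. norm (x i * y i)) summable_on A"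
    by (rule Infinite_Sum.abs_summable_on_comparison_test'[OF summable_on_add[OF x y]])
  then show xy: "(\<lambda>i. x i * y i) summable_on A"
    by (rule abs_summable_summable)
  show "infsum (\<lambda>i. x i * y i) A \<le> sqrt (infsum (\<lambda>i. (x i)\<^sup>2) A) * sqrt (infsum (\<lambda>i. (y i)\<^sup>2) A)"
  proof (rule infsum_le_finite_sums[OF xy])
    fix F assume F: "finite F" "F \<subseteq> A"
    have "(\<Sum>i\<in>F. x i * y i) \<le> sqrt (\<Sum>i\<in>F. (x i)\<^sup>2) * sqrt (\<Sum>i\<in>F. (y i)\<^sup>2)"
      by (rule sum_mult_le_sqrt_sum_squares)
    also have "\<dots> \<le> sqrt (infsum (\<lambda>i. (x i)\<^sup>2) A) * sqrt (infsum (\<lambda>i. (y i)\<^sup>2) A)"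
      using F by (intro mult_mono real_sqrt_le_mono finite_sum_le_infsum[OF x]
          finite_sum_le_infsum[OF y]) (auto simp: infsum_nonneg sum_nonneg)
    finally show "(\<Sum>i\<in>F. x i * y i) \<le> \<dots>" .
  qed
qed

lemma le_square_if_le_mult_sqrt:
  fixes q c :: real
  assumes "c \<ge> 0" and "q \<le> c * sqrt q"
  shows "q \<le> c\<^sup>2"
proof (cases "q > 0")
  case True
  then have "sqrt q * sqrt q \<le> c * sqrt q" using assms(2) by simp
  from mult_right_le_imp_le[OF this] have "sqrt q \<le> c" using True by simp
  then show ?thesis using True real_sqrt_le_iff by fastforce
qed (use assms(1) in \<open>simp add: order_trans[of q 0]\<close>)

lemma summable_on_mult_bounded:
  fixes \<phi> g :: "'a \<Rightarrow> real"
  assumes \<phi>: "\<phi> summable_on A" and \<phi>_nonneg: "\<And>p. p \<in> A \<Longrightarrow> \<phi> p \<ge> 0"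
    and g: "\<And>p. p \<in> A \<Longrightarrow> \<bar>g p\<bar> \<le> B"
  shows "(\<lambda>p. \<phi> p * g p) summable_on A"
proof -
  have "(\<lambda>p. norm (\<phi> p * g p)) summable_on A"
    by (rule Infinite_Sum.abs_summable_on_comparison_test'[OF summable_on_cmult_left[OF \<phi>, of B]])
       (simp add: abs_mult \<phi>_nonneg mult_left_mono g)
  then show ?thesis by (rule abs_summable_summable)
qed

lemma has_sum_product_nonneg:
  fixes f g :: "'a \<Rightarrow> real"
  assumes "\<And>i. f i \<ge> 0" "\<And>j. g j \<ge> 0" "f summable_on UNIV" "g summable_on UNIV"
  shows "((\<lambda>(i, j). f i * g j) has_sum (infsum f UNIV * infsum g UNIV)) UNIV"
proof -
  have row: "((\<lambda>j. f i * g j) has_sum (f i * infsum g UNIV)) UNIV" for i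
    by (rule has_sum_cmult_right) (use assms in simp)
  have "(\<lambda>p. f (fst p) * g (snd p)) summable_on Sigma UNIV (\<lambda>_. UNIV)"
    by (rule summable_on_SigmaI[where g = "\<lambda>i. f i * infsum g UNIV"])
       (use row assms in \<open>auto intro: summable_on_cmult_left\<close>)
  then have S: "(\<lambda>(i, j). f i * g j) summable_on UNIV"
    by (simp add: case_prod_unfold)
  have "infsum (\<lambda>(i, j). f i * g j) UNIV = infsum (\<lambda>i. f i * infsum g UNIV) UNIV"
    using infsum_Sigma'_banach[of "\<lambda>i j. f i * g j" UNIV "\<lambda>_. UNIV"] S
    by (simp add: infsum_cmult_right assms(4))
  also have "\<dots> = infsum f UNIV * infsum g UNIV"
    by (simp add: infsum_cmult_left assms(3))
  finally show ?thesis using S has_sum_iff by blast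
qed

text \<open>Proof by duality: on finitely many frequencies, \<open>\<Sum> R(n)^2 = \<Sum>_p \<phi>(p) \<Sum>_n R(n) h(n - \<kappa> p)\<close>, and Cauchy-Schwarz
  for each translate of \<open>h\<close> bounds this by \<open>(\<Sum>\<phi>) |R| |h|\<close>.\<close>

lemma
  fixes \<phi> :: "'a \<Rightarrow> real" and \<kappa> :: "'a \<Rightarrow> int" and h :: "int \<Rightarrow> real"
  assumes \<phi>_nonneg: "\<And>p. \<phi> p \<ge> 0" and \<phi>: "\<phi> summable_on UNIV"
    and h: "(\<lambda>i. (h i)\<^sup>2) summable_on UNIV"
  shows Young_l1_l2:
      "(\<lambda>n. (infsum (\<lambda>p. \<phi> p * h (n - \<kappa> p)) UNIV)\<^sup>2) summable_on UNIV"
      "infsum (\<lambda>n. (infsum (\<lambda>p. \<phi> p * h (n - \<kappa> p)) UNIV)\<^sup>2) UNIV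
         \<le> (infsum \<phi> UNIV)\<^sup>2 * infsum (\<lambda>i. (h i)\<^sup>2) UNIV"
proof -
  define \<Phi> where "\<Phi> = infsum \<phi> UNIV"
  define H where "H = infsum (\<lambda>i. (h i)\<^sup>2) UNIV"
  define R where "R n = infsum (\<lambda>p. \<phi> p * h (n - \<kappa> p)) UNIV" for n
  have \<Phi>_nonneg: "\<Phi> \<ge> 0" unfolding \<Phi>_def by (simp add: infsum_nonneg \<phi>_nonneg)
  have h_le: "\<bar>h i\<bar> \<le> sqrt H" for i
    using infsum_ge_element[OF h, of i] by (simp add: H_def real_le_rsqrt)
  have summable_term: "(\<lambda>p. \<phi> p * h (m - \<kappa> p)) summable_on UNIV" for m
    using \<phi> \<phi>_nonneg h_le by (rule summable_on_mult_bounded)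
  have finite_sums: "(\<Sum>n\<in>F. (R n)\<^sup>2) \<le> \<Phi>\<^sup>2 * H" if F: "finite F" for F
  proof -
    define Q where "Q = (\<Sum>n\<in>F. (R n)\<^sup>2)"
    have dual: "(\<Sum>n\<in>F. R n * h (n - k)) \<le> sqrt Q * sqrt H" for k
    proof -
      have "(\<Sum>n\<in>F. (h (n - k))\<^sup>2) = (\<Sum>i\<in>(\<lambda>n. n - k) ` F. (h i)\<^sup>2)"
        by (simp add: sum.reindex inj_on_def)
      also have "\<dots> \<le> H"
        unfolding H_def by (rule finite_sum_le_infsum[OF h]) (use F in auto)
      finally have "sqrt Q * sqrt (\<Sum>n\<in>F. (h (n - k))\<^sup>2) \<le> sqrt Q * sqrt H"
        by (intro mult_left_mono) (auto simp: Q_def sum_nonneg)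
      with sum_mult_le_sqrt_sum_squares[of R "\<lambda>n. h (n - k)" F] show ?thesis
        unfolding Q_def by linarith
    qed
    have "((\<lambda>p. \<Sum>n\<in>F. R n * (\<phi> p * h (n - \<kappa> p))) has_sum (\<Sum>n\<in>F. R n * R n)) UNIV"
      unfolding R_def
      by (intro has_sum_sum F has_sum_cmult_right has_sum_infsum summable_term)
    moreover have "(\<lambda>p. \<Sum>n\<in>F. R n * (\<phi> p * h (n - \<kappa> p)))
        = (\<lambda>p. \<phi> p * (\<Sum>n\<in>F. R n * h (n - \<kappa> p)))"
      by (simp add: sum_distrib_left algebra_simps)
    ultimately have Q: "((\<lambda>p. \<phi> p * (\<Sum>n\<in>F. R n * h (n - \<kappa> p))) has_sum Q) UNIV"
      by (simp add: Q_def power2_eq_square)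
    then have "Q = infsum (\<lambda>p. \<phi> p * (\<Sum>n\<in>F. R n * h (n - \<kappa> p))) UNIV"
      by (simp add: infsumI)
    also have "\<dots> \<le> infsum (\<lambda>p. \<phi> p * (sqrt Q * sqrt H)) UNIV"
      using Q by (intro infsum_mono summable_on_cmult_left \<phi> mult_left_mono dual \<phi>_nonneg)
        (auto dest: has_sum_imp_summable)
    also have "\<dots> = \<Phi> * sqrt Q * sqrt H"
      by (simp add: \<Phi>_def infsum_cmult_left \<phi>)
    finally have "Q \<le> (\<Phi> * sqrt H) * sqrt Q"
      by (simp add: ac_simps)
    then have "Q \<le> (\<Phi> * sqrt H)\<^sup>2"
      using \<Phi>_nonneg by (intro le_square_if_le_mult_sqrt) (auto simp: H_def infsum_nonneg)
    then show ?thesis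
      by (simp add: Q_def power_mult_distrib H_def infsum_nonneg)
  qed
  have sq: "(\<lambda>n. (R n)\<^sup>2) summable_on UNIV"
    by (rule nonneg_bdd_above_summable_on) (use finite_sums in \<open>auto intro!: bdd_aboveI2\<close>)
  then show "(\<lambda>n. (infsum (\<lambda>p. \<phi> p * h (n - \<kappa> p)) UNIV)\<^sup>2) summable_on UNIV"
    by (simp add: R_def)
  from infsum_le_finite_sums[OF sq] finite_sums
  show "infsum (\<lambda>n. (infsum (\<lambda>p. \<phi> p * h (n - \<kappa> p)) UNIV)\<^sup>2) UNIV
      \<le> (infsum \<phi> UNIV)\<^sup>2 * infsum (\<lambda>i. (h i)\<^sup>2) UNIV"
    by (simp add: R_def \<Phi>_def H_def)
qed

section \<open>Sobolev weights and norms\<close>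

lemma hs_weight_pos: "hs_weight s n > 0"
  using add_pos_nonneg[OF zero_less_one zero_le_power2[of "real_of_int n"]]
  unfolding hs_weight_def by simp

lemma hs_weight_nonneg [simp]: "hs_weight s n \<ge> 0"
  using hs_weight_pos[of s n] by simp

lemma hs_weight_mult: "hs_weight s n * hs_weight t n = hs_weight (s + t) n"
  by (simp add: hs_weight_def powr_add)

lemma hs_weight_mono: "s \<le> t \<Longrightarrow> hs_weight s n \<le> hs_weight t n"
  by (simp add: hs_weight_def powr_mono)

lemma hs_weight_zero [simp]: "hs_weight 0 n = 1"
  using add_pos_nonneg[OF zero_less_one zero_le_power2[of "real_of_int n"]]
  unfolding hs_weight_def by simp

lemma summable_on_hs_weight:
  assumes s: "s > 1/2"
  shows "hs_weight (-s) summable_on UNIV"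
proof -
  define h where "h = (\<lambda>k::nat. hs_weight (-s) (int k))"
  have "summable (\<lambda>k. real k powr (-(2 * s)))"
    using s by (subst summable_real_powr_iff) auto
  then have p: "summable (\<lambda>k. real (Suc k) powr (-(2 * s)))"
    by (subst summable_Suc_iff)
  have le: "h k \<le> 2 powr s * real (Suc k) powr (-(2 * s))" for k
  proof -
    have "(real (Suc k))\<^sup>2 / 2 \<le> 1 + (real k)\<^sup>2"
      using zero_le_power2[of "real k - 1"] by (simp add: power2_eq_square algebra_simps)
    then have "h k \<le> ((real (Suc k))\<^sup>2 / 2) powr (-s)"
      unfolding h_def hs_weight_def using s by (intro powr_mono2') auto
    also have "\<dots> = 2 powr s * real (Suc k) powr (-(2 * s))"
      by (simp add: powr_divide powr_minus_divide powr_powr[symmetric] divide_simps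
          powr_realpow[symmetric] power2_eq_square powr_mult)
    finally show ?thesis .
  qed
  have "summable h"
    by (rule summable_comparison_test[OF _ summable_mult[OF p, of "2 powr s"]])
       (use le in \<open>auto simp: h_def\<close>)
  then have h: "h summable_on UNIV"
    by (rule summable_nonneg_imp_summable_on) (simp add: h_def hs_weight_def)
  have "hs_weight (-s) summable_on range int"
    by (subst summable_on_reindex) (use h in \<open>auto simp: h_def o_def\<close>)
  moreover have "hs_weight (-s) summable_on range (\<lambda>k. - int k)"
    by (subst summable_on_reindex) (use h in \<open>auto simp: inj_on_def h_def o_def hs_weight_def\<close>)
  ultimately have "hs_weight (-s) summable_on (range int \<union> range (\<lambda>k. - int k))"
    by (rule summable_on_union)
  also have "range int \<union> range (\<lambda>k. - int k) = UNIV"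
  proof -
    have "k \<in> range int \<union> range (\<lambda>k. - int k)" for k :: int
      using image_eqI[of k int "nat k"] image_eqI[of k "\<lambda>k. - int k" "nat (- k)"]
      by (cases "k \<ge> 0") auto
    then show ?thesis by blast
  qed
  finally show ?thesis .
qed

lemma hs_norm_nonneg: "hs_norm s u \<ge> 0"
  unfolding hs_norm_def by (rule real_sqrt_ge_zero, rule infsum_nonneg) simp

lemma hs_norm_sq: "(hs_norm s u)\<^sup>2 = infsum (\<lambda>n. hs_weight s n * (cmod (u n))\<^sup>2) UNIV"
proof -
  have "0 \<le> infsum (\<lambda>n. hs_weight s n * (cmod (u n))\<^sup>2) UNIV"
    by (rule infsum_nonneg) simp
  then show ?thesis by (simp add: hs_norm_def)
qed

lemma hs_weight_coeff_le_hs_norm: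
  assumes "in_Hs s u"
  shows "hs_weight s n * (cmod (u n))\<^sup>2 \<le> (hs_norm s u)\<^sup>2"
  unfolding hs_norm_sq using assms by (intro infsum_ge_element) (auto simp: in_Hs_def)

lemma in_Hs_hs_norm_le_sqrt:
  assumes le: "\<And>n. hs_weight s n * (cmod (f n))\<^sup>2 \<le> g n" and g: "g summable_on UNIV"
  shows "in_Hs s f" and "hs_norm s f \<le> sqrt (infsum g UNIV)"
proof -
  show f: "in_Hs s f"
    unfolding in_Hs_def by (rule summable_on_comparison_test[OF g le]) simp
  show "hs_norm s f \<le> sqrt (infsum g UNIV)"
    unfolding hs_norm_def
    using f by (intro real_sqrt_le_mono infsum_mono[OF _ g le]) (simp add: in_Hs_def)
qed

lemma
  assumes s: "s > 1/2" and u: "in_Hs s u"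
  shows summable_on_cmod_Hs: "(\<lambda>n. cmod (u n)) summable_on UNIV"
    and infsum_cmod_le_hs_norm:
      "infsum (\<lambda>n. cmod (u n)) UNIV \<le> sqrt (infsum (hs_weight (-s)) UNIV) * hs_norm s u"
proof -
  define x where "x n = sqrt (hs_weight (-s) n)" for n
  define y where "y n = sqrt (hs_weight s n) * cmod (u n)" for n
  have xy: "x n * y n = cmod (u n)" for n
    by (simp add: x_def y_def real_sqrt_mult[symmetric] hs_weight_mult)
  have x2: "(\<lambda>n. (x n)\<^sup>2) = hs_weight (-s)"
    by (simp add: x_def fun_eq_iff)
  have y2: "(\<lambda>n. (y n)\<^sup>2) = (\<lambda>n. hs_weight s n * (cmod (u n))\<^sup>2)"
    by (simp add: y_def fun_eq_iff power_mult_distrib)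
  have x: "(\<lambda>n. (x n)\<^sup>2) summable_on UNIV" and y: "(\<lambda>n. (y n)\<^sup>2) summable_on UNIV"
    using summable_on_hs_weight[OF s] u by (simp_all add: x2 y2 in_Hs_def)
  show "(\<lambda>n. cmod (u n)) summable_on UNIV"
    using summable_on_mult_of_squares[OF x y] by (simp add: xy)
  show "infsum (\<lambda>n. cmod (u n)) UNIV \<le> sqrt (infsum (hs_weight (-s)) UNIV) * hs_norm s u"
    using Cauchy_Schwarz_infsum[OF x y] by (simp add: xy x2 y2 hs_norm_def)
qed

lemma
  assumes x: "in_Hs s x" and y: "in_Hs s y"
  shows in_Hs_add: "in_Hs s (\<lambda>n. x n + y n)"
    and hs_norm_triangle: "hs_norm s (\<lambda>n. x n + y n) \<le> hs_norm s x + hs_norm s y"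
proof -
  define X where "X n = sqrt (hs_weight s n) * cmod (x n)" for n
  define Y where "Y n = sqrt (hs_weight s n) * cmod (y n)" for n
  have X: "(\<lambda>n. (X n)\<^sup>2) summable_on UNIV" and Y: "(\<lambda>n. (Y n)\<^sup>2) summable_on UNIV"
    using x y by (simp_all add: X_def Y_def power_mult_distrib in_Hs_def)
  have le: "hs_weight s n * (cmod (x n + y n))\<^sup>2 \<le> (X n)\<^sup>2 + 2 * (X n * Y n) + (Y n)\<^sup>2" for n
  proof -
    have "(cmod (x n + y n))\<^sup>2 \<le> (cmod (x n) + cmod (y n))\<^sup>2"
      by (intro power_mono norm_triangle_ineq) simp
    then have "hs_weight s n * (cmod (x n + y n))\<^sup>2 \<le> hs_weight s n * (cmod (x n) + cmod (y n))\<^sup>2"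
      by (simp add: mult_left_mono)
    then show ?thesis
      by (simp add: X_def Y_def power2_eq_square algebra_simps)
  qed
  have "((\<lambda>n. (X n)\<^sup>2 + 2 * (X n * Y n) + (Y n)\<^sup>2)
      has_sum ((hs_norm s x)\<^sup>2 + 2 * infsum (\<lambda>n. X n * Y n) UNIV + (hs_norm s y)\<^sup>2)) UNIV"
    using X Y summable_on_mult_of_squares[OF X Y]
    by (intro has_sum_add has_sum_cmult_right)
       (auto simp: hs_norm_sq X_def Y_def power_mult_distrib)
  note sum = this[THEN has_sum_imp_summable] this[THEN infsumI]
  show "in_Hs s (\<lambda>n. x n + y n)"
    by (rule in_Hs_hs_norm_le_sqrt(1)[OF le sum(1)])
  have "infsum (\<lambda>n. X n * Y n) UNIV \<le> hs_norm s x * hs_norm s y"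
    using Cauchy_Schwarz_infsum[OF X Y]
    by (simp add: X_def Y_def power_mult_distrib hs_norm_def)
  then have "(hs_norm s x)\<^sup>2 + 2 * infsum (\<lambda>n. X n * Y n) UNIV + (hs_norm s y)\<^sup>2
      \<le> (hs_norm s x + hs_norm s y)\<^sup>2"
    by (simp add: power2_eq_square algebra_simps)
  then have "sqrt (infsum (\<lambda>n. (X n)\<^sup>2 + 2 * (X n * Y n) + (Y n)\<^sup>2) UNIV) \<le> hs_norm s x + hs_norm s y"
    using sum(2) hs_norm_nonneg[of s x] hs_norm_nonneg[of s y] by (simp add: real_sqrt_le_iff real_le_lsqrt)
  with in_Hs_hs_norm_le_sqrt(2)[OF le sum(1)]
  show "hs_norm s (\<lambda>n. x n + y n) \<le> hs_norm s x + hs_norm s y"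
    by linarith
qed

lemma in_Hs_uminus: "in_Hs s (\<lambda>n. - x n) \<longleftrightarrow> in_Hs s x"
  by (simp add: in_Hs_def)

lemma hs_norm_minus_commute: "hs_norm s (\<lambda>n. x n - y n) = hs_norm s (\<lambda>n. y n - x n)"
  by (simp add: hs_norm_def norm_minus_commute)

lemma hs_norm_reverse_triangle:
  assumes x: "in_Hs s x" and y: "in_Hs s y"
  shows "\<bar>hs_norm s x - hs_norm s y\<bar> \<le> hs_norm s (\<lambda>n. x n - y n)"
proof -
  have le: "hs_norm s a \<le> hs_norm s (\<lambda>n. a n - b n) + hs_norm s b"
    if a: "in_Hs s a" and b: "in_Hs s b" for a b
  proof -
    have "in_Hs s (\<lambda>n. a n - b n)"
      using in_Hs_add[OF a, of "\<lambda>n. - b n"] b by (simp add: in_Hs_uminus)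
    from hs_norm_triangle[OF this b] show ?thesis by simp
  qed
  show ?thesis
    using le[OF x y] le[OF y x] by (simp add: abs_le_iff hs_norm_minus_commute[of s y])
qed

lemma continuous_on_hs_norm:
  assumes "cont_Hs s T v"
  shows "continuous_on {0..T} (\<lambda>t. hs_norm s (v t))"
  unfolding continuous_on_def
proof
  fix t0 assume t0: "t0 \<in> {0..T}"
  have v_Hs: "\<And>t. t \<in> {0..T} \<Longrightarrow> in_Hs s (v t)"
    and lim: "((\<lambda>t. hs_norm s (\<lambda>n. v t n - v t0 n)) \<longlongrightarrow> 0) (at t0 within {0..T})"
    using assms t0 by (auto simp: cont_Hs_def)
  have "\<forall>\<^sub>F t in at t0 within {0..T}.
      norm (hs_norm s (v t) - hs_norm s (v t0)) \<le> hs_norm s (\<lambda>n. v t n - v t0 n)"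
    using hs_norm_reverse_triangle[OF v_Hs v_Hs[OF t0]]
    by (auto simp: eventually_at_filter)
  from Lim_null_comparison[OF this lim]
  show "((\<lambda>t. hs_norm s (v t)) \<longlongrightarrow> hs_norm s (v t0)) (at t0 within {0..T})"
    by (rule LIM_zero_cancel)
qed

lemma bdd_above_hs_norm:
  assumes "cont_Hs s T v"
  shows "bdd_above ((\<lambda>t. hs_norm s (v t)) ` {0..T})"
  using compact_continuous_image[OF continuous_on_hs_norm[OF assms] compact_Icc]
  by (intro bounded_imp_bdd_above compact_imp_bounded)

lemma hs_norm_le_SUP:
  assumes "cont_Hs s T v" and "t \<in> {0..T}"
  shows "hs_norm s (v t) \<le> (SUP \<tau>\<in>{0..T}. hs_norm s (v \<tau>))"
  using bdd_above_hs_norm[OF assms(1)] by (intro cSUP_upper assms(2))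

section \<open>Triple convolutions\<close>

definition conv3 :: "(int \<Rightarrow> real) \<Rightarrow> (int \<Rightarrow> real) \<Rightarrow> (int \<Rightarrow> real) \<Rightarrow> int \<Rightarrow> real" where
  "conv3 f g h n = infsum (\<lambda>(i, j). f i * g j * h (n - (i + j))) UNIV"

lemma summable_on_conv3_term:
  fixes f g h :: "int \<Rightarrow> real"
  assumes "\<And>i. f i \<ge> 0" "\<And>j. g j \<ge> 0" "f summable_on UNIV" "g summable_on UNIV"
    and "\<And>k. \<bar>h k\<bar> \<le> B"
  shows "(\<lambda>(i, j). f i * g j * h (n - (i + j))) summable_on UNIV"
  using summable_on_mult_bounded[OF has_sum_product_nonneg[OF assms(1-4), THEN has_sum_imp_summable],
      of "\<lambda>(i, j). h (n - (i + j))" B]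
  by (simp add: case_prod_unfold assms)

lemma
  fixes f g h :: "int \<Rightarrow> real"
  shows summable_on_conv3_term_rotate:
      "(\<lambda>(i, j). f i * g j * h (n - (i + j))) summable_on UNIV
        \<longleftrightarrow> (\<lambda>(i, j). g i * h j * f (n - (i + j))) summable_on UNIV"
    and conv3_rotate: "conv3 f g h n = conv3 g h f n"
proof -
  define \<sigma> where "\<sigma> = (\<lambda>(i::int, j::int). (j, n - (i + j)))"
  have bij: "bij_betw \<sigma> UNIV UNIV"
    by (rule bij_betwI[where g = "\<lambda>(i, j). (n - (i + j), i)"]) (auto simp: \<sigma>_def)
  have comp: "(\<lambda>p. (\<lambda>(i, j). g i * h j * f (n - (i + j))) (\<sigma> p))
      = (\<lambda>(i, j). f i * g j * h (n - (i + j)))"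
    by (auto simp: \<sigma>_def fun_eq_iff algebra_simps)
  show "(\<lambda>(i, j). f i * g j * h (n - (i + j))) summable_on UNIV
      \<longleftrightarrow> (\<lambda>(i, j). g i * h j * f (n - (i + j))) summable_on UNIV"
    using summable_on_reindex_bij_betw[OF bij, where f = "\<lambda>(i, j). g i * h j * f (n - (i + j))"]
    unfolding comp .
  show "conv3 f g h n = conv3 g h f n"
    using infsum_reindex_bij_betw[OF bij, where f = "\<lambda>(i, j). g i * h j * f (n - (i + j))"]
    unfolding comp conv3_def .
qed

lemma conv3_l2:
  fixes f g h :: "int \<Rightarrow> real"
  assumes f: "\<And>i. f i \<ge> 0" "f summable_on UNIV" and g: "\<And>j. g j \<ge> 0" "g summable_on UNIV"
    and h: "(\<lambda>k. (h k)\<^sup>2) summable_on UNIV"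
  shows "(\<lambda>n. (conv3 f g h n)\<^sup>2) summable_on UNIV"
    and "infsum (\<lambda>n. (conv3 f g h n)\<^sup>2) UNIV
      \<le> (infsum f UNIV * infsum g UNIV)\<^sup>2 * infsum (\<lambda>k. (h k)\<^sup>2) UNIV"
proof -
  define \<phi> where "\<phi> = (\<lambda>(i::int, j::int). f i * g j)"
  have \<phi>: "(\<phi> has_sum (infsum f UNIV * infsum g UNIV)) UNIV"
    unfolding \<phi>_def by (rule has_sum_product_nonneg[OF f(1) g(1) f(2) g(2)])
  have \<phi>_nonneg: "\<phi> p \<ge> 0" for p
    using f g by (auto simp: \<phi>_def split: prod.split)
  have conv: "conv3 f g h n = infsum (\<lambda>p. \<phi> p * h (n - (\<lambda>(i, j). i + j) p)) UNIV" for n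
    by (simp add: conv3_def \<phi>_def case_prod_unfold)
  show "(\<lambda>n. (conv3 f g h n)\<^sup>2) summable_on UNIV"
    unfolding conv by (rule Young_l1_l2(1)[OF \<phi>_nonneg has_sum_imp_summable[OF \<phi>] h])
  show "infsum (\<lambda>n. (conv3 f g h n)\<^sup>2) UNIV
      \<le> (infsum f UNIV * infsum g UNIV)\<^sup>2 * infsum (\<lambda>k. (h k)\<^sup>2) UNIV"
    unfolding conv infsumI[OF \<phi>, symmetric]
    by (rule Young_l1_l2(2)[OF \<phi>_nonneg has_sum_imp_summable[OF \<phi>] h])
qed

lemma cmod_trilin_le_conv3:
  assumes a: "(\<lambda>i. cmod (u i)) summable_on UNIV"
  shows "cmod (trilin u n) \<le> conv3 (\<lambda>i. cmod (u i)) (\<lambda>i. cmod (u i)) (\<lambda>i. cmod (u i)) n"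
proof -
  define N where "N = (\<lambda>(x, y, z). cmod (u x) * cmod (u y) * cmod (u z))"
  define \<psi> where "\<psi> = (\<lambda>(i::int, j::int). (i, j, n - (i + j)))"
  have inj: "inj \<psi>" by (auto simp: \<psi>_def inj_on_def)
  have "(\<lambda>(i, j). cmod (u i) * cmod (u j) * cmod (u (n - (i + j)))) summable_on UNIV"
    using a by (intro summable_on_conv3_term[where B = "infsum (\<lambda>i. cmod (u i)) UNIV"])
      (auto intro: infsum_ge_element[OF a])
  then have N_range: "N summable_on range \<psi>"
    by (subst summable_on_reindex[OF inj]) (simp add: N_def \<psi>_def o_def case_prod_unfold)
  have sub: "resonant_set n \<subseteq> range \<psi>"
    by (auto simp: resonant_set_def \<psi>_def image_iff intro!: exI[of _ "(_, _)"])
  have N_res: "N summable_on resonant_set n"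
    by (rule summable_on_subset_banach[OF N_range sub])
  define P where "P = (\<lambda>(x, y, z). u x * u y * u z)"
  have norm_P: "norm (P p) = N p" for p
    by (cases p) (simp add: P_def N_def norm_mult)
  have P: "P summable_on resonant_set n"
    by (rule abs_summable_summable) (simp add: norm_P N_res)
  have "cmod (trilin u n) = norm (infsum P (resonant_set n))"
    by (simp add: trilin_def P_def)
  also have "\<dots> \<le> infsum N (resonant_set n)"
    by (rule norm_infsum_le[OF has_sum_infsum[OF P] has_sum_infsum[OF N_res]]) (simp add: norm_P)
  also have "\<dots> \<le> infsum N (range \<psi>)"
    by (rule infsum_mono_neutral[OF N_res N_range]) (use sub in \<open>auto simp: N_def\<close>)
  also have "\<dots> = infsum (N \<circ> \<psi>) UNIV"
    by (rule infsum_reindex[OF inj])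
  also have "N \<circ> \<psi> = (\<lambda>(i, j). cmod (u i) * cmod (u j) * cmod (u (n - (i + j))))"
    by (auto simp: N_def \<psi>_def)
  finally show ?thesis
    by (simp only: conv3_def)
qed

section \<open>The trilinear term\<close>

lemma one_plus_sq_sum3_le:
  fixes i j k :: int and m :: real
  assumes "1 + (real_of_int i)\<^sup>2 \<le> m" "1 + (real_of_int j)\<^sup>2 \<le> m" "1 + (real_of_int k)\<^sup>2 \<le> m"
  shows "1 + (real_of_int (i + j + k))\<^sup>2 \<le> 9 * m"
proof -
  have "(real_of_int (i + j + k))\<^sup>2 \<le> 3 * ((real_of_int i)\<^sup>2 + (real_of_int j)\<^sup>2 + (real_of_int k)\<^sup>2)"
    using zero_le_power2[of "real_of_int i - real_of_int j"] zero_le_power2[of "real_of_int j - real_of_int k"]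
      zero_le_power2[of "real_of_int i - real_of_int k"]
    by (simp add: power2_eq_square algebra_simps)
  with assms show ?thesis by argo
qed

lemma abs_mult_sqrt_hs_weight_le:
  fixes i j k :: int
  assumes s: "s \<ge> 1/2"
  shows "\<bar>real_of_int (i + j + k)\<bar> * sqrt (hs_weight (-s) (i + j + k))
    \<le> 3 powr s * (sqrt (hs_weight s i) + sqrt (hs_weight s j) + sqrt (hs_weight s k))"
proof -
  define W where "W x = 1 + (real_of_int x)\<^sup>2" for x
  define n where "n = i + j + k"
  define m where "m = max (W i) (max (W j) (W k))"
  have W_ge: "W x \<ge> 1" for x by (simp add: W_def)
  have m: "m \<ge> 0" using W_ge[of i] by (simp add: m_def le_max_iff_disj)
  have sqrt_hs_weight: "sqrt (hs_weight s x) = W x powr (s / 2)" for x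
    using W_ge[of x] by (simp add: hs_weight_def W_def powr_half_sqrt[symmetric] powr_powr)
  have "(real_of_int n)\<^sup>2 * hs_weight (-s) n \<le> W n * W n powr (-s)"
    unfolding hs_weight_def W_def by (intro mult_right_mono) simp_all
  also have "\<dots> = W n powr (1 - s)"
    using W_ge[of n] by (simp add: powr_diff powr_minus divide_inverse)
  also have "\<dots> \<le> W n powr s"
    using W_ge[of n] s by (intro powr_mono) auto
  also have "\<dots> \<le> (9 * m) powr s"
    using W_ge[of n] s one_plus_sq_sum3_le[of i m j k]
    by (intro powr_mono2) (auto simp: n_def m_def W_def)
  also have "\<dots> = 9 powr s * m powr s"
    using m by (simp add: powr_mult)
  also have "(9::real) powr s = 3 powr s * 3 powr s"
    by (simp add: powr_mult[symmetric])
  also have "m powr s = m powr (s / 2) * m powr (s / 2)"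
    by (simp add: powr_add[symmetric])
  finally have "sqrt ((real_of_int n)\<^sup>2 * hs_weight (-s) n) \<le> 3 powr s * m powr (s / 2)"
    by (intro real_le_lsqrt) (auto simp: power2_eq_square ac_simps)
  then have "\<bar>real_of_int n\<bar> * sqrt (hs_weight (-s) n) \<le> 3 powr s * m powr (s / 2)"
    by (simp add: real_sqrt_mult)
  also have "m powr (s / 2) \<le> W i powr (s / 2) + W j powr (s / 2) + W k powr (s / 2)"
    by (auto simp: m_def max_def add_nonneg_nonneg)
  finally show ?thesis
    by (simp add: n_def sqrt_hs_weight mult_left_mono)
qed

lemma abs_mult_sqrt_hs_weight_conv3_le:
  fixes a :: "int \<Rightarrow> real"
  assumes s: "s \<ge> 1/2" and a_nonneg: "\<And>i. a i \<ge> 0" and a: "a summable_on UNIV"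
    and b_le: "\<And>i. sqrt (hs_weight s i) * a i \<le> B"
  shows "\<bar>real_of_int n\<bar> * sqrt (hs_weight (-s) n) * conv3 a a a n
    \<le> 3 powr (s + 1) * conv3 a a (\<lambda>i. sqrt (hs_weight s i) * a i) n"
proof -
  define b where "b = (\<lambda>i. sqrt (hs_weight s i) * a i)"
  define V where "V = \<bar>real_of_int n\<bar> * sqrt (hs_weight (-s) n)"
  define t where "t f g h = (\<lambda>(i, j). f i * g j * h (n - (i + j)))" for f g h :: "int \<Rightarrow> real"
  have b_nonneg: "b i \<ge> 0" for i by (simp add: b_def a_nonneg)
  have aaa: "t a a a summable_on UNIV"
    unfolding t_def using a a_nonneg
    by (intro summable_on_conv3_term[where B = "infsum a UNIV"]) (auto intro: infsum_ge_element)
  have aab: "t a a b summable_on UNIV"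
    unfolding t_def using a a_nonneg b_le b_nonneg
    by (intro summable_on_conv3_term[where B = B]) (auto simp: b_def)
  have baa: "t b a a summable_on UNIV"
    using aab summable_on_conv3_term_rotate[of b a a n] by (simp add: t_def)
  have aba: "t a b a summable_on UNIV"
    using baa summable_on_conv3_term_rotate[of a b a n] by (simp add: t_def)
  have pointwise: "V * t a a a p \<le> 3 powr s * (t b a a p + t a b a p + t a a b p)" for p
  proof (cases p)
    case (Pair i j)
    have "V \<le> 3 powr s * (sqrt (hs_weight s i) + sqrt (hs_weight s j) + sqrt (hs_weight s (n - (i + j))))"
      using abs_mult_sqrt_hs_weight_le[OF s, of i j "n - (i + j)"] by (simp add: V_def)
    then have "V * (a i * a j * a (n - (i + j)))
        \<le> 3 powr s * (sqrt (hs_weight s i) + sqrt (hs_weight s j) + sqrt (hs_weight s (n - (i + j))))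
          * (a i * a j * a (n - (i + j)))"
      by (rule mult_right_mono) (simp add: a_nonneg)
    then show ?thesis
      by (simp add: Pair t_def b_def algebra_simps)
  qed
  have sum: "((\<lambda>p. 3 powr s * (t b a a p + t a b a p + t a a b p))
      has_sum 3 powr s * (conv3 b a a n + conv3 a b a n + conv3 a a b n)) UNIV"
    using baa aba aab unfolding conv3_def t_def
    by (intro has_sum_cmult_right has_sum_add has_sum_infsum)
  have "V * conv3 a a a n = infsum (\<lambda>p. V * t a a a p) UNIV"
    by (simp add: conv3_def t_def infsum_cmult_right aaa[unfolded t_def])
  also have "\<dots> \<le> 3 powr s * (conv3 b a a n + conv3 a b a n + conv3 a a b n)"
    by (rule has_sum_mono[OF has_sum_infsum sum pointwise])
       (use aaa in \<open>simp add: summable_on_cmult_right\<close>)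
  also have "\<dots> = 3 powr (s + 1) * conv3 a a b n" \<comment> \<open>the three terms agree up to rotation\<close>
    using conv3_rotate[of b a a n] conv3_rotate[of a b a n] by (simp add: powr_add)
  finally show ?thesis by (simp add: V_def b_def)
qed

lemma
  assumes s: "s > 1/2" and u: "in_Hs s u"
  shows in_Hs_trilin: "in_Hs (-s) (\<lambda>n. of_int n * trilin u n)"
    and hs_norm_trilin_le: "hs_norm (-s) (\<lambda>n. of_int n * trilin u n)
      \<le> 3 powr (s + 1) * infsum (hs_weight (-s)) UNIV * (hs_norm s u) ^ 3"
proof -
  define a where "a = (\<lambda>i. cmod (u i))"
  define b where "b = (\<lambda>i. sqrt (hs_weight s i) * a i)"
  define N where "N = hs_norm s u"
  define Z where "Z = infsum (hs_weight (-s)) UNIV"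
  define c where "c = 3 powr (s + 1)"
  have a_nonneg: "a i \<ge> 0" for i by (simp add: a_def)
  have a: "a summable_on UNIV" and A: "infsum a UNIV \<le> sqrt Z * N"
    using summable_on_cmod_Hs[OF s u] infsum_cmod_le_hs_norm[OF s u] by (simp_all add: a_def Z_def N_def)
  have b_sq: "(b i)\<^sup>2 = hs_weight s i * (cmod (u i))\<^sup>2" for i
    by (simp add: b_def a_def power_mult_distrib)
  have b: "(\<lambda>i. (b i)\<^sup>2) summable_on UNIV" and B: "infsum (\<lambda>i. (b i)\<^sup>2) UNIV = N\<^sup>2"
    using u by (simp_all add: b_sq in_Hs_def hs_norm_sq N_def)
  have b_le: "b i \<le> N" for i
    using hs_weight_coeff_le_hs_norm[OF u, of i] hs_norm_nonneg[of s u]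
    unfolding N_def b_sq[symmetric] by (rule power2_le_imp_le)
  have pointwise: "hs_weight (-s) n * (cmod (of_int n * trilin u n))\<^sup>2 \<le> (c * conv3 a a b n)\<^sup>2" for n
  proof -
    have "\<bar>real_of_int n\<bar> * sqrt (hs_weight (-s) n) * cmod (trilin u n)
        \<le> \<bar>real_of_int n\<bar> * sqrt (hs_weight (-s) n) * conv3 a a a n"
      using cmod_trilin_le_conv3[OF a[unfolded a_def], of n] by (simp add: a_def mult_left_mono)
    also have "\<dots> \<le> c * conv3 a a b n"
      unfolding c_def b_def
      using s a a_nonneg b_le[unfolded b_def]
      by (intro abs_mult_sqrt_hs_weight_conv3_le[where B = N]) auto
    finally have "(\<bar>real_of_int n\<bar> * sqrt (hs_weight (-s) n) * cmod (trilin u n))\<^sup>2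
        \<le> (c * conv3 a a b n)\<^sup>2"
      by (rule power_mono) simp
    then show ?thesis
      by (simp add: norm_mult power_mult_distrib ac_simps)
  qed
  have conv: "(\<lambda>n. (conv3 a a b n)\<^sup>2) summable_on UNIV"
    "infsum (\<lambda>n. (conv3 a a b n)\<^sup>2) UNIV \<le> (infsum a UNIV * infsum a UNIV)\<^sup>2 * N\<^sup>2"
    using conv3_l2[OF a_nonneg a a_nonneg a b] by (simp_all add: B)
  have g: "(\<lambda>n. (c * conv3 a a b n)\<^sup>2) summable_on UNIV"
    using summable_on_cmult_right[OF conv(1), of "c\<^sup>2"] by (simp add: power_mult_distrib)
  show "in_Hs (-s) (\<lambda>n. of_int n * trilin u n)"
    by (rule in_Hs_hs_norm_le_sqrt(1)[OF pointwise g])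
  have "sqrt (infsum (\<lambda>n. (c * conv3 a a b n)\<^sup>2) UNIV)
      = c * sqrt (infsum (\<lambda>n. (conv3 a a b n)\<^sup>2) UNIV)"
    by (simp add: power_mult_distrib infsum_cmult_right conv(1) real_sqrt_mult c_def)
  also have "\<dots> \<le> c * (infsum a UNIV * infsum a UNIV * N)"
    using conv(2) infsum_nonneg[of UNIV a] a_nonneg hs_norm_nonneg[of s u]
    by (intro mult_left_mono real_le_lsqrt) (auto simp: c_def N_def power_mult_distrib)
  also have "\<dots> \<le> c * (sqrt Z * N * (sqrt Z * N) * N)"
    using A infsum_nonneg[of UNIV a] a_nonneg hs_norm_nonneg[of s u]
    by (intro mult_left_mono mult_right_mono mult_mono) (auto simp: c_def N_def)
  also have "\<dots> = c * Z * N ^ 3"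
    using infsum_nonneg[of UNIV "hs_weight (-s)"] by (simp add: Z_def power3_eq_cube)
  finally show "hs_norm (-s) (\<lambda>n. of_int n * trilin u n) \<le> 3 powr (s + 1) * infsum (hs_weight (-s)) UNIV * (hs_norm s u) ^ 3"
    using in_Hs_hs_norm_le_sqrt(2)[OF pointwise g] by (simp add: c_def Z_def N_def)
qed

section \<open>The resonant term\<close>

lemma sq_mult_hs_weight_le:
  assumes "s \<ge> 1/4"
  shows "(real_of_int n)\<^sup>2 * hs_weight (-(3 * s)) n \<le> hs_weight s n"
proof -
  have "(real_of_int n)\<^sup>2 * hs_weight (-(3 * s)) n \<le> hs_weight 1 n * hs_weight (-(3 * s)) n"
    by (intro mult_right_mono) (simp_all add: hs_weight_def)
  also have "\<dots> = hs_weight (1 - 3 * s) n"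
    by (simp add: hs_weight_mult)
  also have "\<dots> \<le> hs_weight s n"
    using assms by (intro hs_weight_mono) simp
  finally show ?thesis .
qed

lemma cmod_sq_le_hs_norm:
  assumes "in_Hs s u"
  shows "(cmod (u n))\<^sup>2 \<le> hs_weight (-s) n * (hs_norm s u)\<^sup>2"
proof -
  have "(cmod (u n))\<^sup>2 = hs_weight (-s) n * (hs_weight s n * (cmod (u n))\<^sup>2)"
    by (simp add: hs_weight_mult[of "-s" n s, folded mult.assoc])
  also have "\<dots> \<le> hs_weight (-s) n * (hs_norm s u)\<^sup>2"
    by (intro mult_left_mono hs_weight_coeff_le_hs_norm[OF assms]) simp
  finally show ?thesis .
qed

lemma
  fixes u u0 :: "int \<Rightarrow> complex"
  assumes s: "s \<ge> 1/4" and u: "in_Hs s u" and u0: "in_Hs s u0"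
    and M: "hs_norm s u \<le> M" and M0: "hs_norm s u0 \<le> M"
  defines "E \<equiv> \<lambda>n. of_int n * complex_of_real ((cmod (u n))\<^sup>2 - (cmod (u0 n))\<^sup>2) * u n"
  shows in_Hs_resonant: "in_Hs (-s) E"
    and hs_norm_resonant_le: "hs_norm (-s) E \<le> M ^ 3"
proof -
  have M_nonneg: "M \<ge> 0" using hs_norm_nonneg[of s u] M by linarith
  have M_sq: "(hs_norm s v)\<^sup>2 \<le> M\<^sup>2" if "hs_norm s v \<le> M" for v
    using that hs_norm_nonneg[of s v] by (intro power_mono) auto
  have coeff_le: "(cmod (v n))\<^sup>2 \<le> hs_weight (-s) n * M\<^sup>2"
    if "in_Hs s v" "hs_norm s v \<le> M" for v n
    using cmod_sq_le_hs_norm[OF that(1), of n] mult_left_mono[OF M_sq[OF that(2)], of "hs_weight (-s) n"]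
    by simp
  have pointwise: "hs_weight (-s) n * (cmod (E n))\<^sup>2 \<le> M ^ 4 * (hs_weight s n * (cmod (u n))\<^sup>2)" for n
  proof -
    define d where "d = (cmod (u n))\<^sup>2 - (cmod (u0 n))\<^sup>2"
    from coeff_le[OF u M, of n] coeff_le[OF u0 M0, of n]
    have "\<bar>d\<bar> \<le> hs_weight (-s) n * M\<^sup>2"
      using zero_le_power2[of "cmod (u n)"] zero_le_power2[of "cmod (u0 n)"]
      unfolding d_def abs_le_iff by linarith
    then have "d\<^sup>2 \<le> (hs_weight (-s) n * M\<^sup>2)\<^sup>2"
      using power_mono[of "\<bar>d\<bar>" _ 2] by simp
    moreover have "cmod (E n) = \<bar>real_of_int n\<bar> * \<bar>d\<bar> * cmod (u n)"
      by (simp only: E_def d_def[symmetric] norm_mult norm_of_real norm_of_int)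
    then have "hs_weight (-s) n * (cmod (E n))\<^sup>2
        = (hs_weight (-s) n * (real_of_int n)\<^sup>2 * (cmod (u n))\<^sup>2) * d\<^sup>2"
      by (simp add: power_mult_distrib)
    ultimately have "hs_weight (-s) n * (cmod (E n))\<^sup>2
        \<le> (hs_weight (-s) n * (real_of_int n)\<^sup>2 * (cmod (u n))\<^sup>2) * (hs_weight (-s) n * M\<^sup>2)\<^sup>2"
      by (metis mult_left_mono hs_weight_nonneg zero_le_mult_iff zero_le_power2)
    also have "\<dots> = M ^ 4 * ((real_of_int n)\<^sup>2 * (hs_weight (-s) n) ^ 3) * (cmod (u n))\<^sup>2"
      by (simp add: power2_eq_square power3_eq_cube power4_eq_xxxx ac_simps)
    also have "(hs_weight (-s) n) ^ 3 = hs_weight (-(3 * s)) n"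
      by (simp add: power3_eq_cube hs_weight_mult)
    also have "M ^ 4 * ((real_of_int n)\<^sup>2 * hs_weight (-(3 * s)) n) * (cmod (u n))\<^sup>2
        \<le> M ^ 4 * hs_weight s n * (cmod (u n))\<^sup>2"
      using sq_mult_hs_weight_le[OF s, of n] by (intro mult_left_mono mult_right_mono) auto
    finally show ?thesis by (simp add: ac_simps)
  qed
  have g: "(\<lambda>n. M ^ 4 * (hs_weight s n * (cmod (u n))\<^sup>2)) summable_on UNIV"
    using u by (intro summable_on_cmult_right) (simp add: in_Hs_def)
  show "in_Hs (-s) E"
    by (rule in_Hs_hs_norm_le_sqrt(1)[OF pointwise g])
  have "infsum (\<lambda>n. M ^ 4 * (hs_weight s n * (cmod (u n))\<^sup>2)) UNIV = M ^ 4 * (hs_norm s u)\<^sup>2"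
    using u by (simp add: infsum_cmult_right in_Hs_def hs_norm_sq)
  also have "\<dots> \<le> M ^ 4 * M\<^sup>2"
    by (rule mult_left_mono[OF M_sq[OF M]]) simp
  also have "\<dots> = (M ^ 3)\<^sup>2"
    by algebra
  finally have "sqrt (infsum (\<lambda>n. M ^ 4 * (hs_weight s n * (cmod (u n))\<^sup>2)) UNIV) \<le> M ^ 3"
    using M_nonneg by (intro real_le_lsqrt) auto
  with in_Hs_hs_norm_le_sqrt(2)[OF pointwise g] show "hs_norm (-s) E \<le> M ^ 3"
    by linarith
qed

theorem lemma6p1:
  fixes s :: real
  assumes "s > 1/2"
  shows "\<exists>C>0. \<forall>(\<beta>::real) (\<gamma>::real) (\<mu>::real) (T::real) (v :: real \<Rightarrow> int \<Rightarrow> complex).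
     \<beta> \<ge> 0 \<and> (\<mu> = 1 \<or> \<mu> = -1) \<and> T > 0 \<and>
     cont_Hs s T v \<and> (\<forall>t\<in>{0..T}. real_valued_coeffs (v t)) \<and> solves_eq \<beta> \<gamma> \<mu> T v
     \<longrightarrow>
     (\<forall>t\<in>{0..T}.
        in_Hs (-s) (\<lambda>n. of_int n * complex_of_real ((cmod (v t n))\<^sup>2 - (cmod (v 0 n))\<^sup>2) * v t n) \<and>
        hs_norm (-s) (\<lambda>n. of_int n * complex_of_real ((cmod (v t n))\<^sup>2 - (cmod (v 0 n))\<^sup>2) * v t n)
          \<le> C * (SUP \<tau>\<in>{0..T}. hs_norm s (v \<tau>)) ^ 3 \<and>
        in_Hs (-s) (\<lambda>n. of_int n * trilin (v t) n) \<and>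
        hs_norm (-s) (\<lambda>n. of_int n * trilin (v t) n)
          \<le> C * (SUP \<tau>\<in>{0..T}. hs_norm s (v \<tau>)) ^ 3)"
proof -
  define K where "K = 3 powr (s + 1) * infsum (hs_weight (-s)) UNIV"
  have K: "K \<ge> 0" by (simp add: K_def infsum_nonneg)
  show ?thesis
  proof (intro exI[of _ "1 + K"] conjI allI impI ballI)
    fix \<beta> \<gamma> \<mu> T :: real and v :: "real \<Rightarrow> int \<Rightarrow> complex" and t :: real
    let ?M = "SUP \<tau>\<in>{0..T}. hs_norm s (v \<tau>)"
    assume "\<beta> \<ge> 0 \<and> (\<mu> = 1 \<or> \<mu> = -1) \<and> T > 0 \<and> cont_Hs s T v
      \<and> (\<forall>t\<in>{0..T}. real_valued_coeffs (v t)) \<and> solves_eq \<beta> \<gamma> \<mu> T v"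
      and t: "t \<in> {0..T}"
    then have v: "cont_Hs s T v" and T: "0 \<in> {0..T}" by auto
    then have v_Hs: "in_Hs s (v t)" "in_Hs s (v 0)" using t by (simp_all add: cont_Hs_def)
    note le_M = hs_norm_le_SUP[OF v t] hs_norm_le_SUP[OF v T]
    have cube: "c * hs_norm s (v t) ^ 3 \<le> (1 + K) * ?M ^ 3" if "0 \<le> c" "c \<le> 1 + K" for c
      using that le_M(1) hs_norm_nonneg[of s "v t"] by (intro mult_mono power_mono) auto
    show "in_Hs (-s) (\<lambda>n. of_int n * trilin (v t) n)"
      using in_Hs_trilin[OF assms v_Hs(1)] .
    show "hs_norm (-s) (\<lambda>n. of_int n * trilin (v t) n) \<le> (1 + K) * ?M ^ 3"
      using hs_norm_trilin_le[OF assms v_Hs(1)] cube[of K] K by (simp add: K_def)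
    have "1/4 \<le> s" using assms by simp
    note resonant = in_Hs_resonant[OF this v_Hs le_M] hs_norm_resonant_le[OF this v_Hs le_M]
    then show "in_Hs (-s) (\<lambda>n. of_int n * complex_of_real ((cmod (v t n))\<^sup>2 - (cmod (v 0 n))\<^sup>2) * v t n)"
      by blast
    have "?M ^ 3 \<le> (1 + K) * ?M ^ 3"
      using K le_M(2) hs_norm_nonneg[of s "v 0"] by (simp add: distrib_right)
    with resonant(2) show "hs_norm (-s) (\<lambda>n. of_int n * complex_of_real ((cmod (v t n))\<^sup>2
        - (cmod (v 0 n))\<^sup>2) * v t n) \<le> (1 + K) * ?M ^ 3"
      by linarith
  qed (use K in simp)
qed

end
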